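(* Let $X$ satisfy (P1) and (P2), and let $\alpha=\alpha_1\cup\dots\cup\alpha_k$ be the polygonal decomposition of a saddle connection $\alpha$ on $X$. Then (1) every non-adjacent segment $\alpha_i$ has length at least $l_0$; (2) for any two consecutive segments $\alpha_i,\alpha_{i+1}$ which are both adjacent, $l(\alpha_i)+l(\alpha_{i+1})>l_0$. Consequently $l(\alpha)\ge (p_\alpha+q_\alpha)\,l_0$.
   Context: $X$ is a translation surface obtained from finitely many Euclidean polygons by gluing pairs of parallel sides of equal length by translations, with (P1): each polygon convex with all interior angles obtuse or right; (P2): no two sides of the same polygon are identified. $l_0$ is the smallest side length among all polygons. A saddle connection is a straight segment on $X$ between singularities (images of polygon vertices) with no singularity in its interior. Polygonal decomposition: cut $\alpha$ each time it passes from one polygon to another, giving consecutive segments $\alpha_1,\dots,\alpha_k$, each contained in a single polygon with endpoints on its boundary. A segment contained in polygon $P$ is adjacent if it goes from the relative interior of a side $e$ of $P$ to the relative interior of a side of $P$ adjacent to $e$; otherwise (its endpoints lie on non-adjacent sides of $P$, or one of its endpoints is a vertex of $P$) it is non-adjacent. $p_\alpha$ is the number of non-adjacent segments; $q_\alpha=\sum\lfloor r/2\rfloor$, the sum over all maximal runs of consecutive adjacent segments, $r$ being the number of segments in the run (i.e. the maximal number of disjoint pairs of consecutive adjacent segments). *)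

theory Defs
  imports "HOL-Analysis.Analysis"
begin

text \<open>
  A finite family of polygons is given by
  N (number of polygons), n i (number of vertices of polygon i) and V i j (the j-th vertex of
  polygon i, j < n i, listed counterclockwise).
  The gluing is a fixed-point-free involution glue on the set of sides; glued sides are parallel,
  of equal length, and identified by a translation (so, with counterclockwise orientation, their
  side vectors are opposite).
\<close>

definition cross :: "complex \<Rightarrow> complex \<Rightarrow> real" where
  "cross u w = Im (cnj u * w)"

definition nxt :: "(nat \<Rightarrow> nat) \<Rightarrow> nat \<Rightarrow> nat \<Rightarrow> nat" where
  "nxt n i j = Suc j mod n i"

definition prv :: "(nat \<Rightarrow> nat) \<Rightarrow> nat \<Rightarrow> nat \<Rightarrow> nat" where
  "prv n i j = (j + n i - 1) mod n i"

definition side_start :: "(nat \<Rightarrow> nat \<Rightarrow> complex) \<Rightarrow> nat \<times> nat \<Rightarrow> complex" where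
  "side_start V s = V (fst s) (snd s)"

definition side_end :: "(nat \<Rightarrow> nat) \<Rightarrow> (nat \<Rightarrow> nat \<Rightarrow> complex) \<Rightarrow> nat \<times> nat \<Rightarrow> complex" where
  "side_end n V s = V (fst s) (nxt n (fst s) (snd s))"

definition side_vec :: "(nat \<Rightarrow> nat) \<Rightarrow> (nat \<Rightarrow> nat \<Rightarrow> complex) \<Rightarrow> nat \<times> nat \<Rightarrow> complex" where
  "side_vec n V s = side_end n V s - side_start V s"

definition sides :: "nat \<Rightarrow> (nat \<Rightarrow> nat) \<Rightarrow> (nat \<times> nat) set" where
  "sides N n = {(i, j). i < N \<and> j < n i}"

definition poly :: "(nat \<Rightarrow> nat) \<Rightarrow> (nat \<Rightarrow> nat \<Rightarrow> complex) \<Rightarrow> nat \<Rightarrow> complex set" where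
  "poly n V i = convex hull (V i ` {..<n i})"

definition vertices :: "(nat \<Rightarrow> nat) \<Rightarrow> (nat \<Rightarrow> nat \<Rightarrow> complex) \<Rightarrow> nat \<Rightarrow> complex set" where
  "vertices n V i = V i ` {..<n i}"

text \<open>Translation vector of the gluing of side s onto side glue s: it maps side_start s to
  side_end (glue s) and side_end s to side_start (glue s).\<close>
definition transl ::
  "(nat \<Rightarrow> nat) \<Rightarrow> (nat \<Rightarrow> nat \<Rightarrow> complex) \<Rightarrow> (nat \<times> nat \<Rightarrow> nat \<times> nat) \<Rightarrow> nat \<times> nat \<Rightarrow> complex" where
  "transl n V glue s = side_start V (glue s) - side_end n V s"

definition translation_surface ::
  "nat \<Rightarrow> (nat \<Rightarrow> nat) \<Rightarrow> (nat \<Rightarrow> nat \<Rightarrow> complex) \<Rightarrow> (nat \<times> nat \<Rightarrow> nat \<times> nat) \<Rightarrow> bool" where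
  "translation_surface N n V glue \<longleftrightarrow>
     0 < N \<and> (\<forall>i<N. 3 \<le> n i \<and> inj_on (V i) {..<n i}) \<and>
     (\<forall>s \<in> sides N n. glue s \<in> sides N n \<and> glue (glue s) = s \<and> glue s \<noteq> s \<and>
        side_vec n V (glue s) = - side_vec n V s)"

text \<open>(P1): each polygon is convex (strictly: every other vertex lies strictly to the left of each
  directed side, counterclockwise orientation) and every interior angle is right or obtuse.\<close>
definition P1 :: "nat \<Rightarrow> (nat \<Rightarrow> nat) \<Rightarrow> (nat \<Rightarrow> nat \<Rightarrow> complex) \<Rightarrow> bool" where
  "P1 N n V \<longleftrightarrow>
     (\<forall>i<N. \<forall>j<n i. \<forall>m<n i. m \<noteq> j \<and> m \<noteq> nxt n i j \<longrightarrow>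
         cross (V i (nxt n i j) - V i j) (V i m - V i j) > 0) \<and>
     (\<forall>i<N. \<forall>j<n i. inner (V i (prv n i j) - V i j) (V i (nxt n i j) - V i j) \<le> 0)"

definition P2 :: "nat \<Rightarrow> (nat \<Rightarrow> nat) \<Rightarrow> (nat \<times> nat \<Rightarrow> nat \<times> nat) \<Rightarrow> bool" where
  "P2 N n glue \<longleftrightarrow> (\<forall>s \<in> sides N n. fst (glue s) \<noteq> fst s)"

definition l0 :: "nat \<Rightarrow> (nat \<Rightarrow> nat) \<Rightarrow> (nat \<Rightarrow> nat \<Rightarrow> complex) \<Rightarrow> real" where
  "l0 N n V = Min ((\<lambda>s. norm (side_vec n V s)) ` sides N n)"

text \<open>A saddle connection given by its polygonal decomposition: segments
  [a i, b i] (i < k) in polygons P i, all in common direction d.  Each segment is a maximal chord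
  of its (convex) polygon in direction d.  The first starts at a vertex, the last ends at a vertex;
  every intermediate exit point b i lies in the relative interior of side (P i, e i) (so is not a
  singularity), and the next segment starts at the image of b i under the gluing translation,
  in the polygon containing the glued partner side.\<close>
definition saddle_decomp ::
  "nat \<Rightarrow> (nat \<Rightarrow> nat) \<Rightarrow> (nat \<Rightarrow> nat \<Rightarrow> complex) \<Rightarrow> (nat \<times> nat \<Rightarrow> nat \<times> nat) \<Rightarrow>
   nat \<Rightarrow> (nat \<Rightarrow> nat) \<Rightarrow> (nat \<Rightarrow> complex) \<Rightarrow> (nat \<Rightarrow> complex) \<Rightarrow> (nat \<Rightarrow> nat) \<Rightarrow> complex \<Rightarrow> bool" where
  "saddle_decomp N n V glue k P a b e d \<longleftrightarrow>
     1 \<le> k \<and> d \<noteq> 0 \<and>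
     (\<forall>i<k. P i < N \<and> a i \<in> poly n V (P i) \<and> b i \<in> poly n V (P i) \<and>
        (\<exists>t>0. b i - a i = t *\<^sub>R d) \<and>
        (\<forall>s>0. a i - s *\<^sub>R d \<notin> poly n V (P i) \<and> b i + s *\<^sub>R d \<notin> poly n V (P i))) \<and>
     a 0 \<in> vertices n V (P 0) \<and> b (k - 1) \<in> vertices n V (P (k - 1)) \<and>
     (\<forall>i. Suc i < k \<longrightarrow>
        e i < n (P i) \<and>
        b i \<in> open_segment (side_start V (P i, e i)) (side_end n V (P i, e i)) \<and>
        fst (glue (P i, e i)) = P (Suc i) \<and>
        a (Suc i) = b i + transl n V glue (P i, e i))"

definition adjacent_seg ::
  "(nat \<Rightarrow> nat) \<Rightarrow> (nat \<Rightarrow> nat \<Rightarrow> complex) \<Rightarrow> (nat \<Rightarrow> nat) \<Rightarrow> (nat \<Rightarrow> complex) \<Rightarrow> (nat \<Rightarrow> complex) \<Rightarrow> nat \<Rightarrow> bool" where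
  "adjacent_seg n V P a b i \<longleftrightarrow>
     (\<exists>f g. f < n (P i) \<and> g < n (P i) \<and>
        a i \<in> open_segment (side_start V (P i, f)) (side_end n V (P i, f)) \<and>
        b i \<in> open_segment (side_start V (P i, g)) (side_end n V (P i, g)) \<and>
        (g = nxt n (P i) f \<or> f = nxt n (P i) g))"

definition p_count :: "nat \<Rightarrow> (nat \<Rightarrow> bool) \<Rightarrow> nat" where
  "p_count k adj = card {i. i < k \<and> \<not> adj i}"

definition max_runs :: "nat \<Rightarrow> (nat \<Rightarrow> bool) \<Rightarrow> (nat \<times> nat) set" where
  "max_runs k adj = {(s, t). s < t \<and> t \<le> k \<and> (\<forall>j. s \<le> j \<and> j < t \<longrightarrow> adj j) \<and>
      (s = 0 \<or> \<not> adj (s - 1)) \<and> (t = k \<or> \<not> adj t)}"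

definition q_count :: "nat \<Rightarrow> (nat \<Rightarrow> bool) \<Rightarrow> nat" where
  "q_count k adj = (\<Sum>(s, t) \<in> max_runs k adj. (t - s) div 2)"

end

(*
  Each segment is a maximal chord of a convex polygon with right or obtuse angles.  A non-adjacent
  chord either runs from a vertex to a side meeting one of the two sides through that vertex, and
  then the right or obtuse angle at their common vertex makes it at least as long as a side, or it
  joins two non-adjacent sides.  Non-adjacent sides are at distance at least l0: at a pair of points
  realising their minimal distance, points interior to both sides can be slid along the (parallel)
  sides until one of them is a vertex; at a vertex the distance cannot be decreased by moving along
  either side through it, which inside an angle smaller than a straight angle is only possible if
  the other side meets a side through the vertex, the case already settled.

  Two consecutive adjacent segments each cut off a corner of their polygon at an end of the side
  along which they are glued.  If they cut off different ends, the two right-angle estimates add up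
  to the length of that side; they cannot cut off the same end, as the straight connection would
  then have to cross back over the side.  Summing over the non-adjacent segments and over disjoint
  pairs of consecutive adjacent segments gives the bound on the length.
*)

theory Submission
  imports Defs
begin

section \<open>Plane geometry\<close>

definition cyc_succ :: "nat \<Rightarrow> nat \<Rightarrow> nat" where
  "cyc_succ m j = Suc j mod m"

definition cyc_pred :: "nat \<Rightarrow> nat \<Rightarrow> nat" where
  "cyc_pred m j = (j + m - 1) mod m"

lemma nxt_eq_cyc_succ: "nxt n i j = cyc_succ (n i) j"
  by (simp add: nxt_def cyc_succ_def)

lemma prv_eq_cyc_pred: "prv n i j = cyc_pred (n i) j"
  by (simp add: prv_def cyc_pred_def)

lemma cyc_succ_eq: "j < m \<Longrightarrow> cyc_succ m j = (if Suc j = m then 0 else Suc j)"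
  by (auto simp: cyc_succ_def)

lemma cyc_pred_eq: "j < m \<Longrightarrow> cyc_pred m j = (if j = 0 then m - 1 else j - 1)"
  by (cases j) (auto simp: cyc_pred_def)

lemma cross_eq: "cross u w = Re u * Im w - Im u * Re w"
  by (simp add: cross_def)

lemma cross_affine_comb:
  assumes "u + v = 1"
  shows "cross a (u *\<^sub>R x + v *\<^sub>R y - c) = u * cross a (x - c) + v * cross a (y - c)"
proof -
  have v: "v = 1 - u" using assms by simp
  show ?thesis unfolding v by (simp add: cross_eq algebra_simps)
qed

lemma convex_cross_halfplane: "convex {y. 0 \<le> cross a (y - c)}"
  unfolding convex_def by (auto simp: cross_affine_comb)

lemma cross_eq_0_if_in_segment:
  assumes "y \<in> closed_segment p q"
  shows "cross (q - p) (y - p) = 0"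
proof -
  obtain u where "y = (1 - u) *\<^sub>R p + u *\<^sub>R q" using assms by (auto simp: in_segment)
  then have yp: "y - p = u *\<^sub>R (q - p)" by (simp add: algebra_simps)
  show ?thesis unfolding yp by (simp add: cross_eq algebra_simps)
qed

lemma segment_point: "0 \<le> t \<Longrightarrow> t \<le> 1 \<Longrightarrow> p + t *\<^sub>R (q - p) \<in> closed_segment p q"
  by (auto simp: in_segment algebra_simps intro!: exI[of _ t])

lemma inner_segment_nonpos:
  assumes "x \<in> closed_segment p q" "inner (q - p) u \<le> 0"
  shows "inner (x - p) u \<le> 0"
proof -
  obtain t where "0 \<le> t" "x = (1 - t) *\<^sub>R p + t *\<^sub>R q" using assms(1) by (auto simp: in_segment)
  moreover from this have "x - p = t *\<^sub>R (q - p)" by (simp add: algebra_simps)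
  ultimately show ?thesis using assms(2) by (simp add: mult_nonneg_nonpos)
qed

lemma inner_open_segment_pos:
  assumes "y \<in> open_segment p q"
  shows "0 < inner (y - p) (q - p)"
proof -
  obtain t where "0 < t" "y = (1 - t) *\<^sub>R p + t *\<^sub>R q" "p \<noteq> q"
    using assms by (auto simp: in_segment)
  moreover from this have "y - p = t *\<^sub>R (q - p)" by (simp add: algebra_simps)
  ultimately show ?thesis by (simp add: power2_norm_eq_inner[symmetric])
qed

lemma halfplane_between:
  fixes x y z d c u :: complex
  assumes "0 < t" "0 < s" "y - x = t *\<^sub>R d" "z - y = s *\<^sub>R d"
    and "inner (x - c) u \<le> 0" "inner (z - c) u \<le> 0"
  shows "inner (y - c) u \<le> 0"
proof -
  have "(s + t) *\<^sub>R (y - c) = s *\<^sub>R (x - c) + t *\<^sub>R (z - c)"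
    using assms(3,4) by (simp add: algebra_simps)
  then have "(s + t) * inner (y - c) u = s * inner (x - c) u + t * inner (z - c) u"
    by (metis inner_add_left inner_scaleR_left)
  moreover have "s * inner (x - c) u \<le> 0" "t * inner (z - c) u \<le> 0"
    using assms by (simp_all add: mult_nonneg_nonpos)
  ultimately show ?thesis using assms(1,2) by (smt (verit) zero_less_mult_iff)
qed

lemma inner_nonneg_if_local_min_dist:
  fixes x y a :: complex
  assumes "0 < e0" and min: "\<And>e. 0 < e \<Longrightarrow> e \<le> e0 \<Longrightarrow> dist x y \<le> dist (x + e *\<^sub>R a) y"
  shows "0 \<le> inner a (x - y)"
proof (rule ccontr)
  define c where "c = - inner a (x - y)"
  assume "\<not> 0 \<le> inner a (x - y)"
  then have c: "0 < c" by (simp add: c_def)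
  then have A: "0 < (norm a)\<^sup>2" by (auto simp: c_def)
  define e where "e = min e0 (c / (norm a)\<^sup>2)"
  have e: "0 < e" "e \<le> e0" using c A assms(1) by (simp_all add: e_def)
  have "e \<le> c / (norm a)\<^sup>2" by (simp add: e_def)
  then have eA: "e * (norm a)\<^sup>2 \<le> c" using A by (simp add: pos_le_divide_eq)
  have "(dist (x + e *\<^sub>R a) y)\<^sup>2 = (dist x y)\<^sup>2 + e * (e * (norm a)\<^sup>2 - 2 * c)"
    unfolding dist_norm power2_norm_eq_inner c_def
    by (simp add: inner_add_left inner_add_right inner_diff_left inner_diff_right inner_commute
        algebra_simps)
  also have "\<dots> < (dist x y)\<^sup>2"
    using e eA c by (smt (verit) mult_pos_neg)
  finally have "dist (x + e *\<^sub>R a) y < dist x y"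
    using power2_less_imp_less zero_le_dist by blast
  then show False using min[OF e(1,2)] by simp
qed

lemma eq_0_if_in_obtuse_cone:
  assumes "0 < cross a b" "inner a z \<le> 0" "inner b z \<le> 0" "0 \<le> cross a z" "0 \<le> cross z b"
  shows "z = 0"
proof -
  have nz: "(norm z)\<^sup>2 = Re z * Re z + Im z * Im z"
    using cmod_power2[of z] by (simp add: power2_eq_square)
  have "cross a b * (norm z)\<^sup>2 = cross z b * inner a z + cross a z * inner b z"
    unfolding nz by (simp add: cross_eq inner_complex_def algebra_simps)
  also have "\<dots> \<le> 0"
    using assms by (simp add: add_nonpos_nonpos mult_nonneg_nonpos)
  finally have "(norm z)\<^sup>2 \<le> 0" using assms(1) by (simp add: mult_le_0_iff)
  then show ?thesis by simp
qed

lemma parallel_if_orthogonal_to_same: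
  fixes e h z :: complex
  assumes "z \<noteq> 0" "inner e z = 0" "inner h z = 0" "e \<noteq> 0"
  shows "\<exists>c. h = c *\<^sub>R e"
proof -
  have "cross e h * Re z = Im h * inner e z - Im e * inner h z"
    "cross e h * Im z = Re e * inner h z - Re h * inner e z"
    by (simp_all add: cross_eq inner_complex_def algebra_simps)
  then have cr: "cross e h = 0" using assms(1-3) by (auto simp: complex_eq_iff)
  have nz: "(norm e)\<^sup>2 = Re e * Re e + Im e * Im e"
    using cmod_power2[of e] by (simp add: power2_eq_square)
  have "(norm e)\<^sup>2 * Re h - inner h e * Re e = - Im e * cross e h"
    "(norm e)\<^sup>2 * Im h - inner h e * Im e = Re e * cross e h"
    unfolding nz by (simp_all add: cross_eq inner_complex_def algebra_simps)
  then have "(norm e)\<^sup>2 *\<^sub>R h = inner h e *\<^sub>R e"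
    using cr by (simp add: complex_eq_iff)
  then have "(1 / (norm e)\<^sup>2) *\<^sub>R ((norm e)\<^sup>2 *\<^sub>R h) = (1 / (norm e)\<^sup>2) *\<^sub>R (inner h e *\<^sub>R e)"
    by simp
  then have "h = (inner h e / (norm e)\<^sup>2) *\<^sub>R e"
    using assms(4) by simp
  then show ?thesis ..
qed

lemma open_segment_extend:
  fixes x y p q :: complex
  assumes x: "x \<in> closed_segment p q" and y: "y \<in> open_segment p q" and xy: "x \<noteq> y"
  shows "\<exists>l>0. y + l *\<^sub>R (y - x) \<in> closed_segment p q"
proof -
  obtain a where a: "x = (1 - a) *\<^sub>R p + a *\<^sub>R q" using x by (auto simp: in_segment)
  obtain b where b: "0 < b" "b < 1" "y = (1 - b) *\<^sub>R p + b *\<^sub>R q" using y by (auto simp: in_segment)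
  have ab: "a \<noteq> b" using xy a b(3) by auto
  have yx: "y - x = (b - a) *\<^sub>R (q - p)" unfolding a b(3) by (simp add: algebra_simps)
  show ?thesis
  proof (cases "a < b")
    case True
    define l where "l = (1 - b) / (b - a)"
    have l0: "l > 0" using True b by (simp add: l_def)
    have lab: "l * (b - a) = 1 - b" using True by (simp add: l_def)
    have "y + l *\<^sub>R (y - x) = y + (1 - b) *\<^sub>R (q - p)" by (simp only: yx scaleR_scaleR lab)
    also have "\<dots> = q" by (simp add: b(3) algebra_simps)
    finally show ?thesis using l0 by auto
  next
    case False
    then have ba: "b < a" using ab by simp
    define l where "l = b / (a - b)"
    have l0: "l > 0" using ba b by (simp add: l_def)
    have lab: "l * (b - a) = - b" using ba by (simp add: l_def field_simps)
    have "y + l *\<^sub>R (y - x) = y + (- b) *\<^sub>R (q - p)" by (simp only: yx scaleR_scaleR lab)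
    also have "\<dots> = p" by (simp add: b(3) algebra_simps)
    finally show ?thesis using l0 by auto
  qed
qed

lemma common_shift_to_endpoint:
  fixes al be c :: real
  assumes "0 < al" "al < 1" "0 < be" "be < 1" "c \<noteq> 0"
  shows "\<exists>s\<ge>0. al + s \<le> 1 \<and> 0 \<le> be + s / c \<and> be + s / c \<le> 1 \<and>
           (al + s = 1 \<or> be + s / c = 1 \<or> be + s / c = 0)"
proof (cases "0 < c")
  case True
  show ?thesis
  proof (cases "1 - al \<le> c * (1 - be)")
    case True
    have "(1 - al) / c \<le> 1 - be" using True \<open>0 < c\<close> by (simp add: divide_le_eq mult.commute)
    moreover have "0 \<le> (1 - al) / c" using assms \<open>0 < c\<close> by simp
    ultimately show ?thesis using assms by (intro exI[of _ "1 - al"]) auto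
  next
    case False
    have "c * (1 - be) / c = 1 - be" using \<open>0 < c\<close> by simp
    then show ?thesis using assms False \<open>0 < c\<close> by (intro exI[of _ "c * (1 - be)"]) auto
  qed
next
  case False
  then have c: "c < 0" using assms by simp
  show ?thesis
  proof (cases "1 - al \<le> - c * be")
    case True
    have "1 - al \<le> - be * c" using True by (simp add: mult.commute)
    then have "- be \<le> (1 - al) / c" using c by (simp add: le_divide_eq)
    moreover have "(1 - al) / c \<le> 0" using assms c by (simp add: divide_nonneg_neg)
    ultimately show ?thesis using assms by (intro exI[of _ "1 - al"]) auto
  next
    case False
    have "(- c * be) / c = - be" using c by simp
    moreover have "c * be \<le> 0" using c assms by (simp add: mult_neg_pos less_imp_le)
    ultimately show ?thesis using assms False c by (intro exI[of _ "- c * be"]) auto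
  qed
qed

lemma pythagoras_obtuse:
  fixes u w c :: "'a::real_inner"
  assumes "inner (u - c) (w - c) \<le> 0"
  shows "(norm (u - c))\<^sup>2 + (norm (w - c))\<^sup>2 \<le> (dist u w)\<^sup>2"
proof -
  have "dist u w = norm ((u - c) - (w - c))" by (simp add: dist_norm)
  then have "(dist u w)\<^sup>2 = (norm (u - c))\<^sup>2 + (norm (w - c))\<^sup>2 - 2 * inner (u - c) (w - c)"
    by (simp add: power2_norm_eq_inner inner_diff_left inner_diff_right inner_commute)
  then show ?thesis using assms by linarith
qed

lemma translate_in_open_segment: "y \<in> open_segment a b \<Longrightarrow> y + T \<in> open_segment (b + T) (a + T)"
proof -
  assume "y \<in> open_segment a b"
  then have "T + y \<in> open_segment (T + a) (T + b)" by simp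
  then show ?thesis by (simp add: add.commute open_segment_commute)
qed

section \<open>Convex polygons with right or obtuse angles\<close>

locale obtuse_polygon =
  fixes m :: nat and W :: "nat \<Rightarrow> complex"
  assumes three_le: "3 \<le> m"
    and strictly_left:
      "\<lbrakk>j < m; l < m; l \<noteq> j; l \<noteq> cyc_succ m j\<rbrakk> \<Longrightarrow> 0 < cross (W (cyc_succ m j) - W j) (W l - W j)"
    and angle_obtuse: "j < m \<Longrightarrow> inner (W (cyc_pred m j) - W j) (W (cyc_succ m j) - W j) \<le> 0"
begin

abbreviation nx :: "nat \<Rightarrow> nat" where "nx \<equiv> cyc_succ m"
abbreviation pv :: "nat \<Rightarrow> nat" where "pv \<equiv> cyc_pred m"

abbreviation edge :: "nat \<Rightarrow> complex set" where
  "edge j \<equiv> closed_segment (W j) (W (nx j))"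

abbreviation edge_interior :: "nat \<Rightarrow> complex set" where
  "edge_interior j \<equiv> open_segment (W j) (W (nx j))"

abbreviation region :: "complex set" where
  "region \<equiv> convex hull (W ` {..<m})"

lemma
  assumes "j < m"
  shows nx_less: "nx j < m" and pv_less: "pv j < m"
    and nx_pv [simp]: "nx (pv j) = j" and pv_nx [simp]: "pv (nx j) = j"
    and pv_neq: "pv j \<noteq> j"
    and nx_nx_neq: "nx (nx j) \<noteq> j" and nx_neq_pv: "nx j \<noteq> pv j"
  using assms three_le by (auto simp: cyc_succ_eq cyc_pred_eq)

lemma nx_inj: "a < m \<Longrightarrow> b < m \<Longrightarrow> nx a = nx b \<Longrightarrow> a = b"
  by (auto simp: cyc_succ_eq split: if_splits)

lemma vertex_in_region: "l < m \<Longrightarrow> W l \<in> region"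
  by (simp add: hull_inc)

lemma edge_subset_region: "j < m \<Longrightarrow> edge j \<subseteq> region"
  by (simp add: closed_segment_subset vertex_in_region nx_less)

lemma cross_edge_nonneg:
  assumes "j < m" "y \<in> region"
  shows "0 \<le> cross (W (nx j) - W j) (y - W j)"
proof -
  have "W ` {..<m} \<subseteq> {y. 0 \<le> cross (W (nx j) - W j) (y - W j)}"
    using strictly_left[OF assms(1)] by (force simp: cross_eq less_imp_le)
  then have "region \<subseteq> {y. 0 \<le> cross (W (nx j) - W j) (y - W j)}"
    by (intro hull_minimal convex_cross_halfplane)
  then show ?thesis using assms(2) by auto
qed

lemma vertex_on_edge: "l < m \<Longrightarrow> g < m \<Longrightarrow> W l \<in> edge g \<Longrightarrow> l = g \<or> l = nx g"
  using strictly_left cross_eq_0_if_in_segment by force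

lemma edge_interior_unique:
  assumes "f < m" "g < m" and y: "y \<in> edge_interior f" "y \<in> edge g"
  shows "f = g"
proof (rule ccontr)
  assume fg: "f \<noteq> g"
  obtain u where u: "0 < u" "u < 1" "y = (1 - u) *\<^sub>R W f + u *\<^sub>R W (nx f)"
    using y(1) by (auto simp: in_segment)
  let ?a = "W (nx g) - W g"
  have "(1 - u) * cross ?a (W f - W g) + u * cross ?a (W (nx f) - W g) = 0"
    using cross_eq_0_if_in_segment[OF y(2)] u(3) cross_affine_comb[of "1 - u" u] by simp
  moreover have "0 \<le> cross ?a (W f - W g)" "0 \<le> cross ?a (W (nx f) - W g)"
    using assms(1,2) by (simp_all add: cross_edge_nonneg vertex_in_region nx_less)
  ultimately have "cross ?a (W f - W g) = 0" "cross ?a (W (nx f) - W g) = 0"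
    using u(1,2) by (smt (verit) mult_pos_pos mult_nonneg_nonneg)+
  \<comment> \<open>both ends of edge f would lie on the line of edge g\<close>
  then have "f = nx g" "nx f = g \<or> nx f = nx g"
    using strictly_left[OF assms(2)] assms fg nx_less by force+
  then show False using fg nx_inj assms nx_nx_neq by auto
qed

lemma corner_pythagoras:
  assumes "c < m" "u \<in> closed_segment (W c) (W (pv c))" "w \<in> edge c"
  shows "(norm (u - W c))\<^sup>2 + (norm (w - W c))\<^sup>2 \<le> (dist u w)\<^sup>2"
proof (rule pythagoras_obtuse)
  have "inner (W (nx c) - W c) (W (pv c) - W c) \<le> 0"
    using angle_obtuse[OF assms(1)] by (simp add: inner_commute)
  then have "inner (w - W c) (W (pv c) - W c) \<le> 0"
    by (rule inner_segment_nonpos[OF assms(3)])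
  then show "inner (u - W c) (w - W c) \<le> 0"
    by (metis inner_commute inner_segment_nonpos[OF assms(2)])
qed

lemma corner_dist_ge:
  assumes "c < m" "u \<in> closed_segment (W c) (W (pv c))" "w \<in> edge c"
  shows "norm (u - W c) \<le> dist u w" "norm (w - W c) \<le> dist u w"
  using corner_pythagoras[OF assms]
  by (smt (verit) power2_le_imp_le zero_le_dist zero_le_power2)+

lemma corner_dist_gt:
  assumes "c < m" "u \<in> closed_segment (W c) (W (pv c))" "w \<in> edge c"
  shows "u \<noteq> W c \<Longrightarrow> norm (w - W c) < dist u w" "w \<noteq> W c \<Longrightarrow> norm (u - W c) < dist u w"
  using corner_pythagoras[OF assms]
  by (smt (verit) power2_less_imp_less zero_le_dist zero_less_norm_iff zero_less_power2 right_minus_eq)+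

definition nonadjacent :: "nat \<Rightarrow> nat \<Rightarrow> bool" where
  "nonadjacent f g \<longleftrightarrow> f \<noteq> g \<and> g \<noteq> nx f \<and> f \<noteq> nx g"

definition min_nonadjacent_pair :: "complex \<Rightarrow> complex \<Rightarrow> bool" where
  "min_nonadjacent_pair x y \<longleftrightarrow>
     (\<forall>f g u v. f < m \<longrightarrow> g < m \<longrightarrow> nonadjacent f g \<longrightarrow> u \<in> edge f \<longrightarrow> v \<in> edge g \<longrightarrow>
        dist x y \<le> dist u v)"

lemma nonadjacent_commute: "nonadjacent f g \<longleftrightarrow> nonadjacent g f"
  by (auto simp: nonadjacent_def)

lemma min_nonadjacent_pair_commute: "min_nonadjacent_pair y x \<longleftrightarrow> min_nonadjacent_pair x y"
  by (simp add: min_nonadjacent_pair_def dist_commute)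

lemma min_nonadjacent_pairD:
  "min_nonadjacent_pair x y \<Longrightarrow> f < m \<Longrightarrow> g < m \<Longrightarrow> nonadjacent f g \<Longrightarrow> u \<in> edge f \<Longrightarrow>
    v \<in> edge g \<Longrightarrow> dist x y \<le> dist u v"
  by (simp add: min_nonadjacent_pair_def)

lemma min_nonadjacent_pair_exists:
  assumes "f < m" "g < m" "nonadjacent f g"
  shows "\<exists>f0 g0 x0 y0. f0 < m \<and> g0 < m \<and> nonadjacent f0 g0 \<and> x0 \<in> edge f0 \<and> y0 \<in> edge g0 \<and>
           min_nonadjacent_pair x0 y0"
proof -
  define K where "K = (\<Union>(f, g) \<in> {(f, g). f < m \<and> g < m \<and> nonadjacent f g}. edge f \<times> edge g)"
  have "finite {(f, g). f < m \<and> g < m \<and> nonadjacent f g}"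
    by (rule finite_subset[of _ "{..<m} \<times> {..<m}"]) auto
  then have "compact K" unfolding K_def by (auto intro!: compact_UN compact_Times)
  moreover have "K \<noteq> {}" using assms by (auto simp: K_def)
  moreover have "continuous_on K (\<lambda>p. dist (fst p) (snd p))" by (intro continuous_intros)
  ultimately obtain p where p: "p \<in> K" and min: "\<forall>q\<in>K. dist (fst p) (snd p) \<le> dist (fst q) (snd q)"
    using continuous_attains_inf by blast
  obtain f0 g0 where "f0 < m" "g0 < m" "nonadjacent f0 g0" "fst p \<in> edge f0" "snd p \<in> edge g0"
    using p unfolding K_def by auto
  moreover have "min_nonadjacent_pair (fst p) (snd p)"
    unfolding min_nonadjacent_pair_def using min unfolding K_def by force
  ultimately show ?thesis by blast
qed

lemma min_pair_not_at_vertex: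
  assumes j: "j < m" and g: "g < m" and nj: "nonadjacent j g" and npj: "nonadjacent (pv j) g"
    and y: "y \<in> edge g" and min: "min_nonadjacent_pair (W j) y"
  shows False
proof -
  define a where "a = W (nx j) - W j"
  define b where "b = W (pv j) - W j"
  define z where "z = y - W j"
  have "0 \<le> inner a (W j - y)"
  proof (rule inner_nonneg_if_local_min_dist[of 1])
    fix e :: real assume "0 < e" "e \<le> 1"
    then have "W j + e *\<^sub>R a \<in> edge j" by (simp add: a_def segment_point)
    then show "dist (W j) y \<le> dist (W j + e *\<^sub>R a) y"
      by (rule min_nonadjacent_pairD[OF min j g nj _ y])
  qed simp
  moreover have "0 \<le> inner b (W j - y)"
  proof (rule inner_nonneg_if_local_min_dist[of 1])
    fix e :: real assume "0 < e" "e \<le> 1"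
    then have "W j + e *\<^sub>R b \<in> edge (pv j)"
      using j by (simp add: b_def segment_point closed_segment_commute[of "W (pv j)"])
    then show "dist (W j) y \<le> dist (W j + e *\<^sub>R b) y"
      by (rule min_nonadjacent_pairD[OF min pv_less[OF j] g npj _ y])
  qed simp
  moreover have yr: "y \<in> region" using edge_subset_region g y by blast
  have "0 \<le> cross a z" using cross_edge_nonneg[OF j yr] by (simp add: a_def z_def)
  moreover have "0 \<le> cross (W j - W (pv j)) (y - W (pv j))"
    using cross_edge_nonneg[OF pv_less[OF j] yr] j by simp
  moreover have "cross (W j - W (pv j)) (y - W (pv j)) = cross z b"
    by (simp add: b_def z_def cross_eq algebra_simps)
  moreover have "0 < cross a b"
    unfolding a_def b_def using j pv_less[OF j] pv_neq[OF j] nx_neq_pv[OF j] by (intro strictly_left) auto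
  ultimately have "z = 0"
    by (intro eq_0_if_in_obtuse_cone) (auto simp: z_def inner_diff_right)
  then have "j = g \<or> j = nx g" using vertex_on_edge j g y by (simp add: z_def)
  then show False using nj by (auto simp: nonadjacent_def)
qed

lemma nonadjacent_at_vertex:
  assumes "j < m" "f < m" "g < m" "nonadjacent f g" "W j \<in> edge f" "g \<noteq> nx j" "nx g \<noteq> pv j"
  shows "nonadjacent j g \<and> nonadjacent (pv j) g"
proof -
  have "f = j \<or> f = pv j" using vertex_on_edge assms(1,2,5) by (metis pv_nx)
  then show ?thesis
    using assms nx_pv[OF assms(1)] nx_inj[of g "pv j"] pv_less[OF assms(1)]
    by (auto simp: nonadjacent_def)
qed

lemma min_pair_interior_orthogonal:
  assumes f: "f < m" and g: "g < m" and fg: "nonadjacent f g" and x: "x \<in> edge_interior f"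
    and y: "y \<in> edge g" and min: "min_nonadjacent_pair x y"
  shows "inner (W (nx f) - W f) (x - y) = 0"
proof -
  define e where "e = W (nx f) - W f"
  obtain t where t: "0 < t" "t < 1" "x = (1 - t) *\<^sub>R W f + t *\<^sub>R W (nx f)"
    using x by (auto simp: in_segment)
  have move: "dist x y \<le> dist (x + s *\<^sub>R e) y" if "- t \<le> s" "s \<le> 1 - t" for s
  proof (rule min_nonadjacent_pairD[OF min f g fg _ y])
    show "x + s *\<^sub>R e \<in> edge f"
      using segment_point[of "t + s" "W f" "W (nx f)"] that by (simp add: t(3) e_def algebra_simps)
  qed
  have "0 \<le> inner e (x - y)"
    by (rule inner_nonneg_if_local_min_dist[of "1 - t"]) (use t move in auto)
  moreover have "0 \<le> inner (- e) (x - y)"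
    by (rule inner_nonneg_if_local_min_dist[of t]) (use t move[of "- _"] in auto)
  ultimately have "inner e (x - y) = 0" by simp
  then show ?thesis by (simp add: e_def)
qed

lemma min_pair_interior_slide:
  assumes f: "f < m" and g: "g < m" and fg: "nonadjacent f g" and x: "x \<in> edge_interior f"
    and y: "y \<in> edge_interior g" and min: "min_nonadjacent_pair x y"
  shows "\<exists>x' y'. dist x' y' = dist x y \<and> x' \<in> edge f \<and> y' \<in> edge g \<and>
           (x' = W f \<or> x' = W (nx f) \<or> y' = W g \<or> y' = W (nx g))"
proof -
  define e where "e = W (nx f) - W f"
  define h where "h = W (nx g) - W g"
  obtain \<alpha> where \<alpha>: "0 < \<alpha>" "\<alpha> < 1" "x = (1 - \<alpha>) *\<^sub>R W f + \<alpha> *\<^sub>R W (nx f)"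
    using x by (auto simp: in_segment)
  obtain \<beta> where \<beta>: "0 < \<beta>" "\<beta> < 1" "y = (1 - \<beta>) *\<^sub>R W g + \<beta> *\<^sub>R W (nx g)"
    using y by (auto simp: in_segment)
  have e0: "e \<noteq> 0" and h0: "h \<noteq> 0" using x y by (auto simp: e_def h_def)
  have xy: "x - y \<noteq> 0"
    using edge_interior_unique[OF f g x] y fg by (auto simp: nonadjacent_def open_segment_def)
  have "inner e (x - y) = 0"
    using min_pair_interior_orthogonal[OF f g fg x _ min] y by (simp add: e_def open_segment_def)
  moreover have "min_nonadjacent_pair y x" using min min_nonadjacent_pair_commute by blast
  then have "inner h (y - x) = 0"
    using min_pair_interior_orthogonal[OF g f _ y] x fg
    by (simp add: h_def open_segment_def nonadjacent_commute)
  then have "inner h (x - y) = 0" by (simp add: inner_diff_right)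
  ultimately obtain c where c: "h = c *\<^sub>R e" using parallel_if_orthogonal_to_same xy e0 by blast
  with h0 have "c \<noteq> 0" by auto
  then obtain s where s: "0 \<le> \<alpha> + s" "\<alpha> + s \<le> 1" "0 \<le> \<beta> + s / c" "\<beta> + s / c \<le> 1"
      "\<alpha> + s = 1 \<or> \<beta> + s / c = 1 \<or> \<beta> + s / c = 0"
    using common_shift_to_endpoint[OF \<alpha>(1,2) \<beta>(1,2)] \<alpha>(1) by (metis add_nonneg_nonneg less_imp_le)
  define x' where "x' = W f + (\<alpha> + s) *\<^sub>R e"
  define y' where "y' = W g + (\<beta> + s / c) *\<^sub>R h"
  have "x' = x + s *\<^sub>R e" by (simp add: x'_def \<alpha>(3) e_def algebra_simps)
  moreover have "y' = y + (s / c) *\<^sub>R h" by (simp add: y'_def \<beta>(3) h_def algebra_simps)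
  then have "y' = y + s *\<^sub>R e" using \<open>c \<noteq> 0\<close> by (simp add: c)
  ultimately have "dist x' y' = dist x y" by (simp add: dist_norm)
  moreover have "x' \<in> edge f" "y' \<in> edge g"
    using s segment_point by (simp_all add: x'_def y'_def e_def h_def)
  moreover have "x' = W (nx f) \<or> y' = W (nx g) \<or> y' = W g"
    using s(5) by (auto simp: x'_def y'_def e_def h_def)
  ultimately show ?thesis by blast
qed

definition adjacent_chord :: "complex \<Rightarrow> complex \<Rightarrow> bool" where
  "adjacent_chord x y \<longleftrightarrow> (\<exists>f g. f < m \<and> g < m \<and> x \<in> edge_interior f \<and> y \<in> edge_interior g \<and>
     (g = nx f \<or> f = nx g))"

lemma adjacent_chord_cuts_corner:
  assumes f: "f < m" and g: "g < m" and fg: "f = nx g \<or> g = nx f"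
    and p: "p \<in> edge_interior g" and q: "q \<in> edge_interior f"
  shows "norm (p - W g) < dist q p \<and> inner (q - W g) (W (nx g) - W g) \<le> 0 \<or>
    norm (p - W (nx g)) < dist q p \<and> inner (q - W (nx g)) (W g - W (nx g)) \<le> 0"
  using fg
proof
  assume f_eq: "f = nx g"
  have "p \<in> closed_segment (W f) (W (pv f))" "q \<in> edge f" "q \<noteq> W f"
    using p q g f_eq by (auto simp: open_segment_def closed_segment_commute)
  then have "norm (p - W f) < dist q p"
    using corner_dist_gt(2)[OF f] by (simp add: dist_commute)
  moreover have "inner (W (nx f) - W f) (W (pv f) - W f) \<le> 0"
    using angle_obtuse[OF f] by (simp add: inner_commute)
  then have "inner (q - W f) (W (pv f) - W f) \<le> 0"
    using inner_segment_nonpos \<open>q \<in> edge f\<close> by blast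
  ultimately show ?thesis using f_eq g by simp
next
  assume g_eq: "g = nx f"
  have "q \<in> closed_segment (W g) (W (pv g))" "p \<in> edge g" "q \<noteq> W g"
    using p q f g_eq by (auto simp: open_segment_def closed_segment_commute)
  then have "norm (p - W g) < dist q p"
    using corner_dist_gt(1)[OF g] by simp
  moreover have "inner (q - W g) (W (nx g) - W g) \<le> 0"
    using inner_segment_nonpos[OF \<open>q \<in> closed_segment (W g) (W (pv g))\<close>] angle_obtuse[OF g] .
  ultimately show ?thesis by simp
qed

context
  fixes L :: real
  assumes edge_length_ge: "\<And>j. j < m \<Longrightarrow> L \<le> norm (W (nx j) - W j)"
begin

lemma min_pair_at_vertex_dist_ge:
  assumes j: "j < m" and fg: "f < m" "g < m" "nonadjacent f g"
    and x: "W j \<in> edge f" and y: "y \<in> edge g" and min: "min_nonadjacent_pair (W j) y"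
  shows "L \<le> dist (W j) y"
proof -
  consider "g = nx j" | "nx g = pv j" | "g \<noteq> nx j" "nx g \<noteq> pv j" by blast
  then show ?thesis
  proof cases
    case 1
    then have "norm (W j - W (nx j)) \<le> dist (W j) y"
      using corner_dist_ge(1)[of "nx j" "W j" y] j y nx_less by simp
    then show ?thesis using edge_length_ge[OF j] by (simp add: norm_minus_commute)
  next
    case 2
    then have "pv (pv j) = g" using fg(2) by (metis pv_nx)
    then have "norm (W j - W (pv j)) \<le> dist y (W j)"
      using corner_dist_ge(2)[of "pv j" y "W j"] j y 2 pv_less by (simp add: closed_segment_commute)
    then show ?thesis
      using edge_length_ge[OF pv_less[OF j]] j by (simp add: dist_commute)
  next
    case 3
    then have "nonadjacent j g" "nonadjacent (pv j) g"
      using nonadjacent_at_vertex[OF j fg x] by auto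
    then show ?thesis using min_pair_not_at_vertex[OF j fg(2) _ _ y min] by blast
  qed
qed

lemma min_pair_dist_ge:
  assumes fg: "f < m" "g < m" "nonadjacent f g" and x: "x \<in> edge f" and y: "y \<in> edge g"
    and min: "min_nonadjacent_pair x y"
  shows "L \<le> dist x y"
proof -
  have at_vertex: "L \<le> dist x' y'"
    if "x' \<in> edge f" "y' \<in> edge g" "min_nonadjacent_pair x' y'"
      "x' = W f \<or> x' = W (nx f) \<or> y' = W g \<or> y' = W (nx g)" for x' y'
    using that(4)
  proof (elim disjE)
    assume "y' = W g"
    then show ?thesis using min_pair_at_vertex_dist_ge[OF fg(2) fg(2) fg(1) _ _ that(1)] that(2,3) fg(3)
      by (simp add: dist_commute min_nonadjacent_pair_commute nonadjacent_commute)
  next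
    assume "y' = W (nx g)"
    then show ?thesis
      using min_pair_at_vertex_dist_ge[OF nx_less[OF fg(2)] fg(2) fg(1) _ _ that(1)] that(2,3) fg(3)
      by (simp add: dist_commute min_nonadjacent_pair_commute nonadjacent_commute)
  qed (use min_pair_at_vertex_dist_ge fg nx_less that in auto)
  show ?thesis
  proof (cases "x = W f \<or> x = W (nx f) \<or> y = W g \<or> y = W (nx g)")
    case True
    then show ?thesis using at_vertex x y min by blast
  next
    case False
    then have "x \<in> edge_interior f" "y \<in> edge_interior g"
      using x y by (auto simp: open_segment_def)
    then obtain x' y' where "dist x' y' = dist x y" "x' \<in> edge f" "y' \<in> edge g"
      "x' = W f \<or> x' = W (nx f) \<or> y' = W g \<or> y' = W (nx g)"
      using min_pair_interior_slide[OF fg] min by blast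
    moreover from this(1) have "min_nonadjacent_pair x' y'"
      using min by (simp add: min_nonadjacent_pair_def)
    ultimately show ?thesis using at_vertex by metis
  qed
qed

lemma nonadjacent_edges_dist_ge:
  assumes "f < m" "g < m" "nonadjacent f g" "x \<in> edge f" "y \<in> edge g"
  shows "L \<le> dist x y"
proof -
  obtain f0 g0 x0 y0 where "f0 < m" "g0 < m" "nonadjacent f0 g0" "x0 \<in> edge f0" "y0 \<in> edge g0"
    and min: "min_nonadjacent_pair x0 y0"
    using min_nonadjacent_pair_exists[OF assms(1-3)] by blast
  then have "L \<le> dist x0 y0" by (rule min_pair_dist_ge)
  also have "\<dots> \<le> dist x y" using min_nonadjacent_pairD[OF min assms] .
  finally show ?thesis .
qed

lemma chord_from_vertex_length_ge:
  assumes j: "j < m" and g: "g < m" and y: "y \<in> edge_interior g"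
    and max: "\<And>l. 0 < l \<Longrightarrow> y + l *\<^sub>R (y - W j) \<notin> region"
  shows "L \<le> dist (W j) y"
proof -
  consider "g = j \<or> g = pv j" | "g = nx j" | "nonadjacent j g"
    using j g by (cases "j = nx g") (auto simp: nonadjacent_def)
  then show ?thesis
  proof cases
    case 1
    \<comment> \<open>the chord would run along edge g and could be extended beyond y\<close>
    then have "W j \<in> edge g" "W j \<noteq> y" using j y by (auto simp: open_segment_def)
    then obtain l where "0 < l" "y + l *\<^sub>R (y - W j) \<in> edge g"
      using open_segment_extend[OF _ y] by blast
    then show ?thesis using max edge_subset_region[OF g] by blast
  next
    case 2
    then have "norm (W j - W (nx j)) \<le> dist (W j) y"
      using corner_dist_ge(1)[OF nx_less[OF j], of "W j" y] j y by (simp add: open_segment_def)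
    then show ?thesis using edge_length_ge[OF j] by (simp add: norm_minus_commute)
  next
    case 3
    then show ?thesis
      using nonadjacent_edges_dist_ge[OF j g] y by (simp add: open_segment_def)
  qed
qed

lemma maximal_chord_length_ge:
  assumes "x \<noteq> y"
    and max: "\<And>l. 0 < l \<Longrightarrow> y + l *\<^sub>R (y - x) \<notin> region \<and> x + l *\<^sub>R (x - y) \<notin> region"
    and x: "(\<exists>j<m. x = W j) \<or> (\<exists>f<m. x \<in> edge_interior f)"
    and y: "(\<exists>j<m. y = W j) \<or> (\<exists>g<m. y \<in> edge_interior g)"
    and not_adj: "\<not> adjacent_chord x y"
  shows "L \<le> dist x y"
proof -
  consider (vertices) j j' where "j < m" "j' < m" "x = W j" "y = W j'"
    | (vertex_edge) j g where "j < m" "g < m" "x = W j" "y \<in> edge_interior g"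
    | (edge_vertex) f j where "f < m" "j < m" "x \<in> edge_interior f" "y = W j"
    | (edges) f g where "f < m" "g < m" "x \<in> edge_interior f" "y \<in> edge_interior g"
    using x y by blast
  then show ?thesis
  proof cases
    case vertices
    show ?thesis
    proof (cases "nonadjacent j j'")
      case True
      then show ?thesis using nonadjacent_edges_dist_ge vertices by simp
    next
      case False
      then have "j' = nx j \<or> j = nx j'" using vertices \<open>x \<noteq> y\<close> by (auto simp: nonadjacent_def)
      then show ?thesis
        using edge_length_ge vertices by (auto simp: dist_norm norm_minus_commute)
    qed
  next
    case vertex_edge
    then show ?thesis using chord_from_vertex_length_ge max by blast
  next
    case edge_vertex
    then have "L \<le> dist (W j) x" using chord_from_vertex_length_ge max by blast
    then show ?thesis using edge_vertex by (simp add: dist_commute)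
  next
    case edges
    show ?thesis
    proof (cases "f = g")
      case True
      then obtain l where "0 < l" "y + l *\<^sub>R (y - x) \<in> edge g"
        using open_segment_extend[OF _ edges(4) \<open>x \<noteq> y\<close>] edges(3) by (auto simp: open_segment_def)
      then show ?thesis using max edge_subset_region[OF edges(2)] by blast
    next
      case False
      then have "nonadjacent f g" using not_adj edges by (auto simp: adjacent_chord_def nonadjacent_def)
      then show ?thesis
        using nonadjacent_edges_dist_ge edges by (simp add: open_segment_def)
    qed
  qed
qed

end

end

lemma adjacent_chords_across_edge:
  assumes P: "obtuse_polygon m W" and Q: "obtuse_polygon m' W'"
    and g: "g < m" and g': "g' < m'"
    and glued: "W' g' = W (cyc_succ m g) + T" "W' (cyc_succ m' g') = W g + T"
    and y: "y \<in> open_segment (W g) (W (cyc_succ m g))"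
    and adj: "obtuse_polygon.adjacent_chord m W x y" "obtuse_polygon.adjacent_chord m' W' (y + T) z"
    and dir: "0 < t" "0 < s" "y - x = t *\<^sub>R d" "z - (y + T) = s *\<^sub>R d"
  shows "norm (W (cyc_succ m g) - W g) < dist x y + dist (y + T) z"
proof -
  interpret P: obtuse_polygon m W by (rule P)
  interpret Q: obtuse_polygon m' W' by (rule Q)
  define v where "v = W g"
  define w where "w = W (P.nx g)"
  obtain f1 g1 where f1: "f1 < m" "g1 < m" "x \<in> P.edge_interior f1" "y \<in> P.edge_interior g1"
    "g1 = P.nx f1 \<or> f1 = P.nx g1"
    using adj(1) by (auto simp: P.adjacent_chord_def)
  then have "g1 = g" using P.edge_interior_unique[OF _ g] y by (auto simp: open_segment_def)
  then have A: "norm (y - v) < dist x y \<and> inner (x - v) (w - v) \<le> 0 \<or>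
      norm (y - w) < dist x y \<and> inner (x - w) (v - w) \<le> 0"
    using P.adjacent_chord_cuts_corner[OF f1(1) g _ y f1(3)] f1(5) by (auto simp: v_def w_def)
  have yT: "y + T \<in> Q.edge_interior g'" using translate_in_open_segment[OF y] glued by simp
  obtain f2 g2 where f2: "f2 < m'" "g2 < m'" "y + T \<in> Q.edge_interior f2" "z \<in> Q.edge_interior g2"
    "g2 = Q.nx f2 \<or> f2 = Q.nx g2"
    using adj(2) by (auto simp: Q.adjacent_chord_def)
  then have "f2 = g'" using Q.edge_interior_unique[OF _ g'] yT by (auto simp: open_segment_def)
  then have B: "norm (y - w) < dist (y + T) z \<and> inner ((z - T) - w) (v - w) \<le> 0 \<or>
      norm (y - v) < dist (y + T) z \<and> inner ((z - T) - v) (w - v) \<le> 0"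
    using Q.adjacent_chord_cuts_corner[OF f2(2) g' _ yT f2(4)] f2(5) glued
    by (auto simp: v_def w_def dist_commute algebra_simps)
  have "between (v, w) y" using y by (simp add: between_mem_segment open_segment_def v_def w_def)
  then have vw: "norm (y - v) + norm (y - w) = norm (w - v)"
    by (simp add: between dist_norm norm_minus_commute)
  \<comment> \<open>if both chords cut the same corner, the saddle connection would turn back across the edge\<close>
  have "(z - T) - y = s *\<^sub>R d" using dir(4) by (simp add: algebra_simps)
  then have "inner (x - c) u \<le> 0 \<Longrightarrow> inner ((z - T) - c) u \<le> 0 \<Longrightarrow> inner (y - c) u \<le> 0" for c u
    using halfplane_between[OF dir(1,2,3)] by blast
  moreover have "0 < inner (y - v) (w - v)" "0 < inner (y - w) (v - w)"
    using y inner_open_segment_pos[of y] by (auto simp: v_def w_def open_segment_commute)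
  ultimately show ?thesis using A B vw by (fastforce simp: v_def w_def)
qed

section \<open>Maximal runs of adjacent segments\<close>

lemma mem_max_runs:
  "(s, t) \<in> max_runs k adj \<longleftrightarrow> s < t \<and> t \<le> k \<and> (\<forall>j. s \<le> j \<and> j < t \<longrightarrow> adj j) \<and>
     (s = 0 \<or> \<not> adj (s - 1)) \<and> (t = k \<or> \<not> adj t)"
  by (simp add: max_runs_def)

lemma finite_max_runs: "finite (max_runs k adj)"
  by (rule finite_subset[of _ "{..k} \<times> {..k}"]) (auto simp: max_runs_def)

lemma max_runs_overlap_le:
  assumes "(s, t) \<in> max_runs k adj" "(s', t') \<in> max_runs k adj"
    and "s \<le> j" "j < t" "s' \<le> j" "j < t'"
  shows "s \<le> s' \<and> t \<le> t'"
proof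
  show "s \<le> s'"
  proof (rule ccontr)
    assume "\<not> s \<le> s'"
    then have "s' \<le> s - 1" "s - 1 < t'" "s \<noteq> 0" using assms(3,6) by linarith+
    then have "adj (s - 1)" using assms(2) unfolding mem_max_runs by blast
    then show False using assms(1) \<open>s \<noteq> 0\<close> unfolding mem_max_runs by blast
  qed
  show "t \<le> t'"
  proof (rule ccontr)
    assume "\<not> t \<le> t'"
    then have "s \<le> t'" "t' < t" using assms(3,6) by linarith+
    then have "adj t'" using assms(1) unfolding mem_max_runs by blast
    moreover have "t' \<noteq> k" using \<open>t' < t\<close> assms(1) unfolding mem_max_runs by linarith
    ultimately show False using assms(2) unfolding mem_max_runs by blast
  qed
qed

lemma max_runs_disjoint:
  assumes "r \<in> max_runs k adj" "r' \<in> max_runs k adj" "r \<noteq> r'"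
  shows "{fst r..<snd r} \<inter> {fst r'..<snd r'} = {}"
proof (rule ccontr)
  obtain s t s' t' where r: "r = (s, t)" "r' = (s', t')" by (cases r, cases r')
  assume "{fst r..<snd r} \<inter> {fst r'..<snd r'} \<noteq> {}"
  then obtain j where "j \<in> {fst r..<snd r} \<inter> {fst r'..<snd r'}" by blast
  then have j: "s \<le> j" "j < t" "s' \<le> j" "j < t'" using r by auto
  have "s \<le> s' \<and> t \<le> t'"
    using max_runs_overlap_le[OF assms(1,2)[unfolded r] j] .
  moreover have "s' \<le> s \<and> t' \<le> t"
    using max_runs_overlap_le[OF assms(2,1)[unfolded r] j(3,4,1,2)] .
  ultimately show False using assms(3) r by simp
qed

lemma mem_max_run:
  assumes "i < k" "adj i"
  shows "\<exists>(s, t) \<in> max_runs k adj. s \<le> i \<and> i < t"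
proof -
  define s where "s = (LEAST s. s \<le> i \<and> (\<forall>j. s \<le> j \<and> j \<le> i \<longrightarrow> adj j))"
  define t where "t = (LEAST t. i < t \<and> (t = k \<or> \<not> adj t))"
  have "s \<le> i \<and> (\<forall>j. s \<le> j \<and> j \<le> i \<longrightarrow> adj j)"
    unfolding s_def by (rule LeastI[of _ i]) (use assms(2) le_antisym in blast)
  then have s: "s \<le> i" "\<forall>j. s \<le> j \<and> j \<le> i \<longrightarrow> adj j" by auto
  have s_least: "s \<le> s'" if "s' \<le> i" "\<forall>j. s' \<le> j \<and> j \<le> i \<longrightarrow> adj j" for s'
    using that by (simp add: s_def Least_le)
  have "i < t \<and> (t = k \<or> \<not> adj t)"
    unfolding t_def by (rule LeastI[of _ k]) (use assms(1) in blast)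
  then have t: "i < t" "t = k \<or> \<not> adj t" by auto
  have t_least: "t \<le> t'" if "i < t'" "t' = k \<or> \<not> adj t'" for t'
    using that by (simp add: t_def Least_le)
  have "t \<le> k" using t_least assms(1) by blast
  have "adj j" if "s \<le> j" "j < t" for j
  proof (cases "j \<le> i")
    case True
    then show ?thesis using s(2) that(1) by blast
  next
    case False
    then have "\<not> (j = k \<or> \<not> adj j)" using t_least[of j] that(2) by force
    then show ?thesis by blast
  qed
  moreover have "s = 0 \<or> \<not> adj (s - 1)"
  proof (rule ccontr)
    assume "\<not> (s = 0 \<or> \<not> adj (s - 1))"
    then have "s \<noteq> 0" "adj (s - 1)" by auto
    have "\<forall>j. s - 1 \<le> j \<and> j \<le> i \<longrightarrow> adj j"
    proof (intro allI impI)
      fix j assume "s - 1 \<le> j \<and> j \<le> i"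
      then have "j = s - 1 \<or> s \<le> j \<and> j \<le> i" by linarith
      then show "adj j" using s(2) \<open>adj (s - 1)\<close> by blast
    qed
    then have "s \<le> s - 1" using s_least s(1) by simp
    then show False using \<open>s \<noteq> 0\<close> by simp
  qed
  ultimately have "(s, t) \<in> max_runs k adj"
    using s t \<open>t \<le> k\<close> by (auto simp: mem_max_runs)
  then show ?thesis using s(1) t(1) by blast
qed

lemma sum_run_ge:
  fixes l :: "nat \<Rightarrow> real"
  assumes nonneg: "\<And>i. 0 \<le> l i"
    and pair: "\<And>i. s \<le> i \<Longrightarrow> Suc i < s + r \<Longrightarrow> L \<le> l i + l (Suc i)"
  shows "real (r div 2) * L \<le> (\<Sum>j = s..<s + r. l j)"
  using pair
proof (induction r arbitrary: s rule: less_induct)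
  case (less r)
  show ?case
  proof (cases "r < 2")
    case True
    then show ?thesis by (simp add: nonneg sum_nonneg)
  next
    case False
    then obtain r' where r': "r = Suc (Suc r')" by (metis add_2_eq_Suc le_add_diff_inverse not_less)
    have "{s..<s + r} = insert s (insert (Suc s) {Suc (Suc s)..<Suc (Suc s) + r'})"
      using r' by auto
    then have "(\<Sum>j = s..<s + r. l j) = l s + l (Suc s) + (\<Sum>j = Suc (Suc s)..<Suc (Suc s) + r'. l j)"
      by simp
    moreover have "L \<le> l s + l (Suc s)" using less.prems r' by simp
    moreover have "real (r' div 2) * L \<le> (\<Sum>j = Suc (Suc s)..<Suc (Suc s) + r'. l j)"
      using less.IH[of r' "Suc (Suc s)"] less.prems r' by simp
    ultimately show ?thesis using r' by (simp add: algebra_simps)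
  qed
qed

lemma Union_max_runs: "(\<Union>r \<in> max_runs k adj. {fst r..<snd r}) = {i. i < k \<and> adj i}"
proof
  show "{i. i < k \<and> adj i} \<subseteq> (\<Union>r \<in> max_runs k adj. {fst r..<snd r})"
  proof
    fix i assume "i \<in> {i. i < k \<and> adj i}"
    then obtain s t where "(s, t) \<in> max_runs k adj" "s \<le> i" "i < t"
      using mem_max_run[of i k adj] by auto
    then show "i \<in> (\<Union>r \<in> max_runs k adj. {fst r..<snd r})" by force
  qed
  show "(\<Union>r \<in> max_runs k adj. {fst r..<snd r}) \<subseteq> {i. i < k \<and> adj i}"
  proof
    fix i assume "i \<in> (\<Union>r \<in> max_runs k adj. {fst r..<snd r})"
    then obtain s t where "(s, t) \<in> max_runs k adj" "s \<le> i" "i < t" by auto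
    then show "i \<in> {i. i < k \<and> adj i}" unfolding mem_max_runs by auto
  qed
qed

lemma q_count_bound:
  fixes l :: "nat \<Rightarrow> real"
  assumes nonneg: "\<And>i. 0 \<le> l i"
    and pair: "\<And>i. Suc i < k \<Longrightarrow> adj i \<Longrightarrow> adj (Suc i) \<Longrightarrow> L \<le> l i + l (Suc i)"
  shows "real (q_count k adj) * L \<le> (\<Sum>i | i < k \<and> adj i. l i)"
proof -
  have "real (q_count k adj) * L = (\<Sum>r \<in> max_runs k adj. real ((snd r - fst r) div 2) * L)"
    by (simp add: q_count_def case_prod_beta sum_distrib_right)
  also have "\<dots> \<le> (\<Sum>r \<in> max_runs k adj. \<Sum>j = fst r..<snd r. l j)"
  proof (rule sum_mono)
    fix r assume r: "r \<in> max_runs k adj"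
    obtain s t where st: "r = (s, t)" by (cases r)
    have run: "s < t" "t \<le> k" "\<forall>j. s \<le> j \<and> j < t \<longrightarrow> adj j"
      using r unfolding st mem_max_runs by blast+
    have "real ((t - s) div 2) * L \<le> (\<Sum>j = s..<s + (t - s). l j)"
      by (rule sum_run_ge[OF nonneg]) (use run pair in auto)
    then show "real ((snd r - fst r) div 2) * L \<le> (\<Sum>j = fst r..<snd r. l j)"
      using run(1) st by simp
  qed
  also have "\<dots> = (\<Sum>i | i < k \<and> adj i. l i)"
    unfolding Union_max_runs[symmetric] using max_runs_disjoint
    by (intro sum.UNION_disjoint[symmetric] finite_max_runs ballI impI finite_atLeastLessThan) blast
  finally show ?thesis .
qed

lemma p_q_count_bound:
  fixes l :: "nat \<Rightarrow> real"
  assumes nonneg: "\<And>i. 0 \<le> l i"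
    and nonadj: "\<And>i. i < k \<Longrightarrow> \<not> adj i \<Longrightarrow> L \<le> l i"
    and pair: "\<And>i. Suc i < k \<Longrightarrow> adj i \<Longrightarrow> adj (Suc i) \<Longrightarrow> L \<le> l i + l (Suc i)"
  shows "real (p_count k adj + q_count k adj) * L \<le> (\<Sum>i<k. l i)"
proof -
  have "real (p_count k adj) * L = (\<Sum>i | i < k \<and> \<not> adj i. L)" by (simp add: p_count_def)
  also have "\<dots> \<le> (\<Sum>i | i < k \<and> \<not> adj i. l i)" using nonadj by (intro sum_mono) auto
  finally have "real (p_count k adj) * L \<le> (\<Sum>i | i < k \<and> \<not> adj i. l i)" .
  moreover have "(\<Sum>i<k. l i) = (\<Sum>i | i < k \<and> adj i. l i) + (\<Sum>i | i < k \<and> \<not> adj i. l i)"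
    by (subst sum.union_disjoint[symmetric]) (auto intro: sum.cong)
  ultimately show ?thesis using q_count_bound[where l = l and k = k and adj = adj and L = L, OF nonneg pair] by (simp add: algebra_simps)
qed

section \<open>Saddle connections\<close>

lemma obtuse_polygon_of_P1:
  assumes "translation_surface N n V glue" "P1 N n V" "i < N"
  shows "obtuse_polygon (n i) (V i)"
  by unfold_locales
    (use assms in \<open>auto simp: translation_surface_def P1_def nxt_eq_cyc_succ prv_eq_cyc_pred\<close>)

lemma l0_le_edge_length:
  assumes "i < N" "j < n i"
  shows "l0 N n V \<le> norm (V i (cyc_succ (n i) j) - V i j)"
proof -
  have "finite (sides N n)"
    by (rule finite_subset[of _ "{..<N} \<times> {..<Max (n ` {..<N})}"])
      (auto simp: sides_def less_le_trans[OF _ Max_ge])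
  then have "l0 N n V \<le> norm (side_vec n V (i, j))"
    unfolding l0_def using assms by (intro Min_le) (auto simp: sides_def)
  then show ?thesis by (simp add: side_vec_def side_start_def side_end_def nxt_eq_cyc_succ)
qed

lemma glued_edge:
  assumes "translation_surface N n V glue" "i < N" "j < n i" "glue (i, j) = (i', j')"
  shows "i' < N" "j' < n i'"
    and "V i' j' = V i (cyc_succ (n i) j) + transl n V glue (i, j)"
    and "V i' (cyc_succ (n i') j') = V i j + transl n V glue (i, j)"
proof -
  have "(i, j) \<in> sides N n" using assms(2,3) by (simp add: sides_def)
  then have "(i', j') \<in> sides N n" "side_vec n V (i', j') = - side_vec n V (i, j)"
    using assms(1,4) unfolding translation_surface_def by metis+
  then show "i' < N" "j' < n i'"
    and "V i' j' = V i (cyc_succ (n i) j) + transl n V glue (i, j)"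
    and "V i' (cyc_succ (n i') j') = V i j + transl n V glue (i, j)"
    using assms(4)
    by (auto simp: sides_def side_vec_def transl_def side_start_def side_end_def nxt_eq_cyc_succ
        algebra_simps)
qed

lemma adjacent_seg_iff:
  assumes "obtuse_polygon (n (P i)) (V (P i))"
  shows "adjacent_seg n V P a b i \<longleftrightarrow> obtuse_polygon.adjacent_chord (n (P i)) (V (P i)) (a i) (b i)"
  by (simp add: adjacent_seg_def obtuse_polygon.adjacent_chord_def[OF assms] side_start_def
      side_end_def nxt_eq_cyc_succ)

context
  fixes N n V glue k P a b e d
  assumes surf: "translation_surface N n V glue"
    and p1: "P1 N n V"
    and sc: "saddle_decomp N n V glue k P a b e d"
begin

lemma saddle_segment:
  assumes "i < k"
  shows "P i < N" "obtuse_polygon (n (P i)) (V (P i))" "\<exists>t>0. b i - a i = t *\<^sub>R d"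
    and "\<And>s. 0 < s \<Longrightarrow> a i - s *\<^sub>R d \<notin> poly n V (P i) \<and> b i + s *\<^sub>R d \<notin> poly n V (P i)"
  using sc assms obtuse_polygon_of_P1[OF surf p1] unfolding saddle_decomp_def by blast+

lemma saddle_crossing:
  assumes "Suc i < k"
  obtains j' where "glue (P i, e i) = (P (Suc i), j')" "j' < n (P (Suc i))" "e i < n (P i)"
    "b i \<in> open_segment (V (P i) (e i)) (V (P i) (cyc_succ (n (P i)) (e i)))"
    "a (Suc i) = b i + transl n V glue (P i, e i)"
    "V (P (Suc i)) j' = V (P i) (cyc_succ (n (P i)) (e i)) + transl n V glue (P i, e i)"
    "V (P (Suc i)) (cyc_succ (n (P (Suc i))) j') = V (P i) (e i) + transl n V glue (P i, e i)"
proof -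
  have h: "e i < n (P i)" "b i \<in> open_segment (side_start V (P i, e i)) (side_end n V (P i, e i))"
    "fst (glue (P i, e i)) = P (Suc i)" "a (Suc i) = b i + transl n V glue (P i, e i)"
    using sc assms unfolding saddle_decomp_def by blast+
  obtain j' where gl: "glue (P i, e i) = (P (Suc i), j')" using h(3) by (metis prod.collapse)
  show thesis
    using that[OF gl _ h(1) _ h(4)] h(2) glued_edge[OF surf saddle_segment(1) h(1) gl] assms
    by (simp add: side_start_def side_end_def nxt_eq_cyc_succ)
qed

lemma saddle_segment_ends:
  assumes "i < k"
  shows "(\<exists>j<n (P i). a i = V (P i) j) \<or>
      (\<exists>f<n (P i). a i \<in> open_segment (V (P i) f) (V (P i) (cyc_succ (n (P i)) f)))"
    and "(\<exists>j<n (P i). b i = V (P i) j) \<or>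
      (\<exists>g<n (P i). b i \<in> open_segment (V (P i) g) (V (P i) (cyc_succ (n (P i)) g)))"
proof -
  show "(\<exists>j<n (P i). a i = V (P i) j) \<or>
      (\<exists>f<n (P i). a i \<in> open_segment (V (P i) f) (V (P i) (cyc_succ (n (P i)) f)))"
  proof (cases i)
    case 0
    then show ?thesis using sc by (auto simp: saddle_decomp_def vertices_def)
  next
    case (Suc i')
    then obtain j' where "j' < n (P i)" "b i' \<in> open_segment (V (P i') (e i')) (V (P i') (cyc_succ (n (P i')) (e i')))"
      "a i = b i' + transl n V glue (P i', e i')"
      "V (P i) j' = V (P i') (cyc_succ (n (P i')) (e i')) + transl n V glue (P i', e i')"
      "V (P i) (cyc_succ (n (P i)) j') = V (P i') (e i') + transl n V glue (P i', e i')"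
      using saddle_crossing[of i'] assms by metis
    then show ?thesis using translate_in_open_segment by metis
  qed
  show "(\<exists>j<n (P i). b i = V (P i) j) \<or>
      (\<exists>g<n (P i). b i \<in> open_segment (V (P i) g) (V (P i) (cyc_succ (n (P i)) g)))"
  proof (cases "Suc i < k")
    case True
    then show ?thesis using saddle_crossing by metis
  next
    case False
    then have "i = k - 1" using assms by simp
    then show ?thesis using sc by (auto simp: saddle_decomp_def vertices_def)
  qed
qed

lemma nonadjacent_segment_length_ge:
  assumes i: "i < k" and not_adj: "\<not> adjacent_seg n V P a b i"
  shows "l0 N n V \<le> dist (a i) (b i)"
proof -
  interpret obtuse_polygon "n (P i)" "V (P i)" by (rule saddle_segment(2)[OF i])
  obtain t where t: "0 < t" "b i - a i = t *\<^sub>R d" using saddle_segment(3)[OF i] by blast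
  have "a i \<noteq> b i" using t sc by (auto simp: saddle_decomp_def)
  moreover have "b i + l *\<^sub>R (b i - a i) \<notin> region \<and> a i + l *\<^sub>R (a i - b i) \<notin> region" if "0 < l" for l
  proof -
    have "b i + l *\<^sub>R (b i - a i) = b i + (l * t) *\<^sub>R d" "a i + l *\<^sub>R (a i - b i) = a i - (l * t) *\<^sub>R d"
      using t(2) by (simp_all add: eq_diff_eq' algebra_simps)
    then show ?thesis using saddle_segment(4)[OF i, of "l * t"] that t(1) by (simp add: poly_def)
  qed
  moreover have "\<not> adjacent_chord (a i) (b i)"
    using not_adj adjacent_seg_iff[of n P i V a b, OF saddle_segment(2)[OF i]] by simp
  ultimately show ?thesis
    using maximal_chord_length_ge[of "l0 N n V"] l0_le_edge_length[OF saddle_segment(1)[OF i]]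
      saddle_segment_ends[OF i] by blast
qed

lemma adjacent_segments_length_gt:
  assumes i: "Suc i < k" and adj: "adjacent_seg n V P a b i" "adjacent_seg n V P a b (Suc i)"
  shows "l0 N n V < dist (a i) (b i) + dist (a (Suc i)) (b (Suc i))"
proof -
  define T where "T = transl n V glue (P i, e i)"
  obtain j' where cr: "j' < n (P (Suc i))" "e i < n (P i)"
    "b i \<in> open_segment (V (P i) (e i)) (V (P i) (cyc_succ (n (P i)) (e i)))"
    "a (Suc i) = b i + T"
    "V (P (Suc i)) j' = V (P i) (cyc_succ (n (P i)) (e i)) + T"
    "V (P (Suc i)) (cyc_succ (n (P (Suc i))) j') = V (P i) (e i) + T"
    using saddle_crossing[OF i] unfolding T_def by metis
  have P: "obtuse_polygon (n (P i)) (V (P i))" and Q: "obtuse_polygon (n (P (Suc i))) (V (P (Suc i)))"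
    using saddle_segment(2) i by auto
  obtain t s where "0 < t" "b i - a i = t *\<^sub>R d" "0 < s" "b (Suc i) - a (Suc i) = s *\<^sub>R d"
    using saddle_segment(3) i by (metis Suc_lessD)
  then have "norm (V (P i) (cyc_succ (n (P i)) (e i)) - V (P i) (e i)) <
      dist (a i) (b i) + dist (b i + T) (b (Suc i))"
    using adjacent_chords_across_edge[OF P Q cr(2,1,5,6,3)] adj cr(4)
      adjacent_seg_iff[of n P i V a b, OF P] adjacent_seg_iff[of n P "Suc i" V a b, OF Q]
    by (simp add: dist_commute)
  moreover have "l0 N n V \<le> norm (V (P i) (cyc_succ (n (P i)) (e i)) - V (P i) (e i))"
    using l0_le_edge_length saddle_segment(1) i cr(2) by (metis Suc_lessD)
  ultimately show ?thesis using cr(4) by simp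
qed

end

theorem mainTheorem4:
  fixes N :: nat and n :: "nat \<Rightarrow> nat" and V :: "nat \<Rightarrow> nat \<Rightarrow> complex"
    and glue :: "nat \<times> nat \<Rightarrow> nat \<times> nat"
    and k :: nat and P :: "nat \<Rightarrow> nat" and a b :: "nat \<Rightarrow> complex"
    and e :: "nat \<Rightarrow> nat" and d :: complex
  assumes surf: "translation_surface N n V glue"
    and p1: "P1 N n V"
    and p2: "P2 N n glue"
    and sc: "saddle_decomp N n V glue k P a b e d"
  shows "(\<forall>i<k. \<not> adjacent_seg n V P a b i \<longrightarrow> l0 N n V \<le> dist (a i) (b i))
       \<and> (\<forall>i. Suc i < k \<and> adjacent_seg n V P a b i \<and> adjacent_seg n V P a b (Suc i) \<longrightarrow>
            dist (a i) (b i) + dist (a (Suc i)) (b (Suc i)) > l0 N n V)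
       \<and> (\<Sum>i<k. dist (a i) (b i)) \<ge>
            real (p_count k (adjacent_seg n V P a b) + q_count k (adjacent_seg n V P a b)) * l0 N n V"
proof -
  have nonadj: "\<forall>i<k. \<not> adjacent_seg n V P a b i \<longrightarrow> l0 N n V \<le> dist (a i) (b i)"
    using nonadjacent_segment_length_ge[OF surf p1 sc] by blast
  have adj: "\<forall>i. Suc i < k \<and> adjacent_seg n V P a b i \<and> adjacent_seg n V P a b (Suc i) \<longrightarrow>
      dist (a i) (b i) + dist (a (Suc i)) (b (Suc i)) > l0 N n V"
    using adjacent_segments_length_gt[OF surf p1 sc] by blast
  have "real (p_count k (adjacent_seg n V P a b) + q_count k (adjacent_seg n V P a b)) * l0 N n V
      \<le> (\<Sum>i<k. dist (a i) (b i))"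
    by (rule p_q_count_bound) (use nonadj adj in \<open>auto intro: less_imp_le\<close>)
  then show ?thesis using nonadj adj by simp
qed

end
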